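(* For any topologically reasonable pointclass $\Gamma$, $\Gamma(\mathbb{D})$ implies $\Gamma(\mathbb{C})$; that is, if every set in $\Gamma$ has the Baire property with respect to the dominating topology $\mathcal{D}$ on $\omega^\omega$, then every set in $\Gamma$ has the Baire property with respect to the standard (Baire space, resp. Cantor space) topology.
   Context: For $N\in\omega$ and $f\in\omega^\omega$ put $[N,f]=\{x\in\omega^\omega: f{\restriction}N\subseteq x \text{ and } x(n)\ge f(n)\text{ for all }n\}$. The sets $[N,f]$ form a base of a topology $\mathcal{D}$ on $\omega^\omega$, the dominating topology (it refines the usual Baire space topology). $\mathbb{D}$ (Hechler forcing) is $\omega\times\omega^\omega$ with $(N,f)\le(M,g)$ iff $N\ge M$, $f{\restriction}M=g{\restriction}M$ and $f\ge g$ pointwise; $\mathbb{C}$ is Cohen forcing $\omega^{<\omega}$ (or $2^{<\omega}$) ordered by reverse inclusion. $\Gamma(\mathbb{D})$ means every set in $\Gamma$ (of subsets of $\omega^\omega$) has the Baire property in $\mathcal{D}$; $\Gamma(\mathbb{C})$ means every set in $\Gamma$ has the Baire property in the usual topology of $\omega^\omega$ or $2^\omega$. A pointclass $\Gamma$ is topologically reasonable if it is closed under continuous preimages and $A\cap Q\in\Gamma$ whenever $A\in\Gamma$ and $Q$ is closed. *)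

theory Defs
  imports "HOL-Analysis.Analysis"
begin

type_synonym baire = "nat \<Rightarrow> nat"

definition baire_top :: "baire topology" where
  "baire_top = product_topology (\<lambda>_. discrete_topology (UNIV :: nat set)) UNIV"

definition dom_basic :: "nat \<Rightarrow> baire \<Rightarrow> baire set" where
  "dom_basic N f = {x. (\<forall>n<N. x n = f n) \<and> (\<forall>n. f n \<le> x n)}"

definition dominating_top :: "baire topology" where
  "dominating_top = topology_generated_by {dom_basic N f | N f. True}"

definition nowhere_dense_in :: "'a topology \<Rightarrow> 'a set \<Rightarrow> bool" where
  "nowhere_dense_in X A \<longleftrightarrow> A \<subseteq> topspace X \<and> X interior_of (X closure_of A) = {}"

definition meager_in :: "'a topology \<Rightarrow> 'a set \<Rightarrow> bool" where
  "meager_in X A \<longleftrightarrow> (\<exists>N :: nat \<Rightarrow> 'a set. (\<forall>n. nowhere_dense_in X (N n)) \<and> A \<subseteq> (\<Union>n. N n))"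

definition baire_property_in :: "'a topology \<Rightarrow> 'a set \<Rightarrow> bool" where
  "baire_property_in X A \<longleftrightarrow> (\<exists>U. openin X U \<and> meager_in X ((A - U) \<union> (U - A)))"

definition top_reasonable :: "baire set set \<Rightarrow> bool" where
  "top_reasonable \<Gamma> \<longleftrightarrow>
     (\<forall>A g. A \<in> \<Gamma> \<and> continuous_map baire_top baire_top g \<longrightarrow> g -` A \<in> \<Gamma>) \<and>
     (\<forall>A Q. A \<in> \<Gamma> \<and> closedin baire_top Q \<longrightarrow> A \<inter> Q \<in> \<Gamma>)"

end

theory Submission
  imports Defs
begin

text \<open>
  Let \<open>decode_fst x = (\<lambda>i. fst (prod_decode (x i)))\<close>. It is continuous for the Baire topology,
  and since \<open>prod_encode (a, b) \<ge> b\<close> it maps every basic set \<open>[N, f]\<close> onto a cylinder, so it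
  maps \<open>\<D>\<close>-open sets to open sets. For \<open>A \<in> \<Gamma>\<close> the set \<open>decode_fst -` A\<close> is in \<open>\<Gamma>\<close>, hence
  differs from a \<open>\<D>\<close>-open \<open>U\<close> by a \<open>\<D>\<close>-meager set, and then \<open>A\<close> differs from the open set
  \<open>decode_fst ` U\<close> by a meager set. This rests on a transfer of category: if
  \<open>decode_fst -` M \<inter> [p]\<close> is covered by \<open>\<D>\<close>-nowhere dense sets \<open>E k\<close>, then \<open>M \<inter> decode_fst ` [p]\<close>
  is meager. Reading \<open>y\<close> digit by digit, one builds a decreasing sequence of Hechler conditions
  below \<open>p\<close> coding \<open>y\<close> along their stems, the \<open>k\<close>-th of which avoids \<open>E k\<close>. Each stage depends
  only on a finite part of \<open>y\<close>, so the set of \<open>y\<close> for which the construction gets stuck is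
  meager; for all other \<open>y\<close> the fusion of the sequence is a preimage of \<open>y\<close> outside every \<open>E k\<close>.
\<close>

lemma meager_in_subset: "meager_in X A \<Longrightarrow> C \<subseteq> A \<Longrightarrow> meager_in X C"
  unfolding meager_in_def by blast

lemma meager_in_empty: "meager_in X {}"
  unfolding meager_in_def nowhere_dense_in_def by (intro exI[of _ "\<lambda>_. {}"]) simp

lemma meager_in_countable_UN:
  fixes S :: "'i::countable \<Rightarrow> 'a set"
  assumes "\<And>l. meager_in X (S l)"
  shows "meager_in X (\<Union>l. S l)"
proof -
  have "\<forall>l. \<exists>N :: nat \<Rightarrow> 'a set. (\<forall>n. nowhere_dense_in X (N n)) \<and> S l \<subseteq> (\<Union>n. N n)"
    using assms unfolding meager_in_def by blast
  from choice[OF this] obtain N :: "'i \<Rightarrow> nat \<Rightarrow> 'a set"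
    where N: "\<forall>l. (\<forall>n. nowhere_dense_in X (N l n)) \<and> S l \<subseteq> (\<Union>n. N l n)"
    by blast
  define M where "M k = case_prod N (from_nat k)" for k
  have "(\<Union>l. S l) \<subseteq> (\<Union>k. M k)"
  proof
    fix y assume "y \<in> (\<Union>l. S l)"
    then obtain l n where "y \<in> N l n" using N by blast
    then have "y \<in> M (to_nat (l, n))" by (simp add: M_def)
    then show "y \<in> (\<Union>k. M k)" by blast
  qed
  moreover have "nowhere_dense_in X (M k)" for k
    using N by (simp add: M_def split: prod.split)
  ultimately show ?thesis unfolding meager_in_def by blast
qed

lemma meager_in_Un: "meager_in X A \<Longrightarrow> meager_in X C \<Longrightarrow> meager_in X (A \<union> C)"
  using meager_in_countable_UN[of X "\<lambda>b. if b then A else C"]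
  by (simp add: UNIV_bool Un_commute)

definition cyl :: "baire \<Rightarrow> nat \<Rightarrow> baire set" where
  "cyl y m = {z. \<forall>i<m. z i = y i}"

lemma self_in_cyl [simp]: "y \<in> cyl y m"
  by (simp add: cyl_def)

lemma topspace_baire_top [simp]: "topspace baire_top = UNIV"
  by (simp add: baire_top_def)

lemma openin_baire_top_cyl: "openin baire_top (cyl y m)"
proof -
  define U where "U i = (if i < m then {y i} else UNIV)" for i
  have "{i. U i \<noteq> UNIV} \<subseteq> {..<m}"
    by (auto simp: U_def)
  then have "finite {i. U i \<noteq> UNIV}"
    by (rule finite_subset) simp
  then have "openin baire_top (Pi\<^sub>E UNIV U)"
    unfolding baire_top_def openin_PiE_gen by simp
  moreover have "Pi\<^sub>E UNIV U = cyl y m"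
    by (auto simp: U_def cyl_def PiE_iff) (metis singletonD)
  ultimately show ?thesis by simp
qed

lemma openin_baire_top_contains_cyl:
  assumes "openin baire_top S" "y \<in> S"
  obtains m where "cyl y m \<subseteq> S"
proof -
  have "openin (product_topology (\<lambda>_. discrete_topology (UNIV :: nat set)) UNIV) S"
    using assms(1) by (simp add: baire_top_def)
  then obtain U where U: "finite {i \<in> UNIV. U i \<noteq> topspace (discrete_topology (UNIV :: nat set))}"
    "y \<in> Pi\<^sub>E UNIV U" "Pi\<^sub>E UNIV U \<subseteq> S"
    using assms(2) unfolding openin_product_topology_alt by blast
  have "finite {i. U i \<noteq> UNIV}"
    using U(1) by simp
  then obtain m where m: "{i. U i \<noteq> UNIV} \<subseteq> {..<m}"
    using finite_nat_bounded by blast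
  have "cyl y m \<subseteq> Pi\<^sub>E UNIV U"
  proof (intro subsetI PiE_I)
    fix z i assume z: "z \<in> cyl y m"
    show "z i \<in> U i"
    proof (cases "i < m")
      case True
      then show ?thesis using z U(2) by (auto simp: cyl_def)
    next
      case False
      then show ?thesis using m by auto
    qed
  qed simp
  then show ?thesis using that U(3) by blast
qed

lemma nowhere_dense_in_baire_top_if:
  assumes "\<And>y L. \<exists>y'\<in>cyl y L. \<exists>m. cyl y' m \<inter> A = {}"
  shows "nowhere_dense_in baire_top A"
  unfolding nowhere_dense_in_def
proof
  show "baire_top interior_of (baire_top closure_of A) = {}"
  proof (rule ccontr)
    assume "baire_top interior_of (baire_top closure_of A) \<noteq> {}"
    then obtain y where "y \<in> baire_top interior_of (baire_top closure_of A)"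
      by blast
    then obtain L where L: "cyl y L \<subseteq> baire_top interior_of (baire_top closure_of A)"
      by (rule openin_baire_top_contains_cyl[OF openin_interior_of])
    obtain y' m where y': "y' \<in> cyl y L" "cyl y' m \<inter> A = {}"
      using assms by blast
    have sub: "cyl y' (max m L) \<subseteq> cyl y' m \<inter> cyl y L"
      using y'(1) unfolding cyl_def by auto
    then have "cyl y' (max m L) \<inter> A = {}"
      using y'(2) by blast
    then have "cyl y' (max m L) \<inter> baire_top closure_of A = {}"
      by (simp only: openin_Int_closure_of_eq_empty[OF openin_baire_top_cyl])
    moreover have "cyl y' (max m L) \<subseteq> baire_top closure_of A"
      using sub L interior_of_subset[of baire_top "baire_top closure_of A"] by blast
    moreover have "y' \<in> cyl y' (max m L)" by simp
    ultimately show False by blast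
  qed
qed simp

lemma meager_in_baire_top_if_locally_meager:
  assumes "\<And>y. y \<in> S \<Longrightarrow> \<exists>m. meager_in baire_top (S \<inter> cyl y m)"
  shows "meager_in baire_top S"
proof -
  define C where "C l = cyl ((!) l) (length l)" for l :: "nat list"
  define T where "T l = (if meager_in baire_top (S \<inter> C l) then S \<inter> C l else {})" for l
  have C: "cyl y m = C (map y [0..<m])" for y m
    by (auto simp: C_def cyl_def)
  have "S \<subseteq> (\<Union>l. T l)"
  proof
    fix y assume y: "y \<in> S"
    then obtain m where "meager_in baire_top (S \<inter> cyl y m)" using assms by blast
    then have "y \<in> T (map y [0..<m])" using y by (simp add: T_def C[symmetric])
    then show "y \<in> (\<Union>l. T l)" by blast
  qed
  moreover have "meager_in baire_top (T l)" for l
    by (simp add: T_def meager_in_empty)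
  ultimately show ?thesis
    using meager_in_countable_UN meager_in_subset by blast
qed

type_synonym hechler = "nat \<times> baire"

definition hset :: "hechler \<Rightarrow> baire set" where
  "hset p = dom_basic (fst p) (snd p)"

definition hechler_le :: "hechler \<Rightarrow> hechler \<Rightarrow> bool" (infix \<open>\<preceq>\<close> 50) where
  "q \<preceq> p \<longleftrightarrow> fst p \<le> fst q \<and> (\<forall>n<fst p. snd q n = snd p n) \<and> (\<forall>n. snd p n \<le> snd q n)"

lemma hechler_le_refl [simp]: "p \<preceq> p"
  by (simp add: hechler_le_def)

lemma hechler_le_trans: "r \<preceq> q \<Longrightarrow> q \<preceq> p \<Longrightarrow> r \<preceq> p"
  unfolding hechler_le_def by (metis order_trans less_le_trans)

lemma hset_mono: "q \<preceq> p \<Longrightarrow> hset q \<subseteq> hset p"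
  unfolding hechler_le_def hset_def dom_basic_def by (auto intro: order_trans)

lemma snd_in_hset: "snd p \<in> hset p"
  by (simp add: hset_def dom_basic_def)

lemma hset_Int:
  assumes "x \<in> hset p" "x \<in> hset p'"
  obtains q where "x \<in> hset q" "q \<preceq> p" "q \<preceq> p'"
proof
  let ?N = "max (fst p) (fst p')"
  let ?q = "(?N, \<lambda>i. if i < ?N then x i else max (snd p i) (snd p' i))"
  show "x \<in> hset ?q" "?q \<preceq> p" "?q \<preceq> p'"
    using assms by (auto simp: hset_def dom_basic_def hechler_le_def)
qed

lemma topspace_dominating_top [simp]: "topspace dominating_top = UNIV"
proof -
  have "dom_basic 0 (\<lambda>_. 0) = UNIV" by (auto simp: dom_basic_def)
  then show ?thesis unfolding dominating_top_def topology_generated_by_topspace by blast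
qed

lemma openin_dominating_top_hset: "openin dominating_top (hset p)"
  unfolding dominating_top_def openin_topology_generated_by_iff hset_def
  by (rule generate_topology_on.Basis) blast

lemma openin_dominating_top_contains_hset:
  assumes "openin dominating_top U" "x \<in> U"
  obtains p where "x \<in> hset p" "hset p \<subseteq> U"
proof -
  have "generate_topology_on {dom_basic N f | N f. True} U"
    using assms(1) unfolding dominating_top_def openin_topology_generated_by_iff .
  then have "\<exists>p. x \<in> hset p \<and> hset p \<subseteq> U"
    using assms(2)
  proof (induction arbitrary: x)
    case (Int a b)
    then obtain p p' where p: "x \<in> hset p" "hset p \<subseteq> a" and p': "x \<in> hset p'" "hset p' \<subseteq> b"
      by blast
    obtain q where "x \<in> hset q" "q \<preceq> p" "q \<preceq> p'"
      using hset_Int[OF p(1) p'(1)] .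
    then show ?case using p(2) p'(2) hset_mono by blast
  next
    case (Basis s)
    then show ?case unfolding hset_def by force
  next
    case (UN K)
    then show ?case by blast
  qed simp
  then show ?thesis using that by blast
qed

lemma nowhere_dense_in_dominating_top_avoid:
  assumes "nowhere_dense_in dominating_top E"
  obtains q where "q \<preceq> p" "hset q \<inter> E = {}"
proof -
  let ?C = "dominating_top closure_of E"
  have "\<not> hset p \<subseteq> ?C"
  proof
    assume "hset p \<subseteq> ?C"
    then have "hset p \<subseteq> dominating_top interior_of ?C"
      by (rule interior_of_maximal[OF _ openin_dominating_top_hset])
    then show False using assms snd_in_hset[of p] unfolding nowhere_dense_in_def by blast
  qed
  then obtain z where z: "z \<in> hset p - ?C" by blast
  have "openin dominating_top (hset p - ?C)"
    by (intro openin_diff openin_dominating_top_hset closedin_closure_of)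
  then obtain p' where p': "z \<in> hset p'" "hset p' \<subseteq> hset p - ?C"
    using openin_dominating_top_contains_hset z by blast
  obtain q where "q \<preceq> p" "q \<preceq> p'"
    using hset_Int z p'(1) by blast
  moreover have "E \<subseteq> ?C"
    by (rule closure_of_subset) simp
  ultimately show ?thesis using that p'(2) hset_mono by blast
qed

lemma hechler_chain_limit:
  fixes c :: "nat \<Rightarrow> hechler"
  assumes chain: "\<And>n m. n \<le> m \<Longrightarrow> c m \<preceq> c n" and unbounded: "\<And>i. \<exists>n. i < fst (c n)"
  obtains x where "\<And>n. x \<in> hset (c n)"
proof
  define s where "s i = (SOME n. i < fst (c n))" for i
  have s: "i < fst (c (s i))" for i
    unfolding s_def using someI_ex[OF unbounded] .
  define x where "x i = snd (c (s i)) i" for i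
  have "(i < fst (c n) \<longrightarrow> x i = snd (c n) i) \<and> snd (c n) i \<le> x i" for n i
  proof (cases "n \<le> s i")
    case True
    then show ?thesis using chain[of n "s i"] unfolding hechler_le_def x_def by auto
  next
    case False
    then show ?thesis using chain[of "s i" n] s[of i] unfolding hechler_le_def x_def by auto
  qed
  then show "x \<in> hset (c n)" for n
    by (auto simp: hset_def dom_basic_def)
qed

definition decode_fst :: "baire \<Rightarrow> baire" where
  "decode_fst x = (\<lambda>i. fst (prod_decode (x i)))"

definition coded :: "hechler \<Rightarrow> baire set" where
  "coded p = cyl (decode_fst (snd p)) (fst p)"

lemma coded_eq_cyl: "y \<in> coded p \<Longrightarrow> coded p = cyl y (fst p)"
  unfolding coded_def cyl_def by auto

lemma continuous_map_decode_fst: "continuous_map baire_top baire_top decode_fst"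
  unfolding baire_top_def continuous_map_componentwise_UNIV
proof
  fix k :: nat
  have "continuous_map (product_topology (\<lambda>_. discrete_topology UNIV) UNIV)
          (discrete_topology UNIV) ((\<lambda>d. fst (prod_decode d)) \<circ> (\<lambda>x. x k))"
    by (rule continuous_map_compose[OF continuous_map_product_projection]) auto
  then show "continuous_map (product_topology (\<lambda>_. discrete_topology UNIV) UNIV)
          (discrete_topology UNIV) (\<lambda>x. decode_fst x k)"
    by (simp add: decode_fst_def o_def)
qed

lemma decode_fst_hset: "decode_fst ` hset p = coded p"
proof
  show "decode_fst ` hset p \<subseteq> coded p"
    by (auto simp: decode_fst_def coded_def cyl_def hset_def dom_basic_def)
  show "coded p \<subseteq> decode_fst ` hset p"
  proof
    fix y assume y: "y \<in> coded p"
    define x where "x i = (if i < fst p then snd p i else prod_encode (y i, snd p i))" for i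
    have "x \<in> hset p"
      by (auto simp: x_def hset_def dom_basic_def le_prod_encode_2)
    moreover have "decode_fst x = y"
      using y by (auto simp: decode_fst_def x_def coded_def cyl_def)
    ultimately show "y \<in> decode_fst ` hset p" by blast
  qed
qed

lemma openin_baire_top_image_decode_fst:
  assumes "openin dominating_top U"
  shows "openin baire_top (decode_fst ` U)"
proof (rule openin_subopen[THEN iffD2], intro ballI)
  fix y assume "y \<in> decode_fst ` U"
  then obtain x where x: "x \<in> U" "y = decode_fst x" by blast
  obtain p where p: "x \<in> hset p" "hset p \<subseteq> U"
    using openin_dominating_top_contains_hset[OF assms x(1)] .
  have "y \<in> coded p"
    unfolding decode_fst_hset[symmetric] x(2) using p(1) by (rule imageI)
  moreover have "coded p \<subseteq> decode_fst ` U"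
    unfolding decode_fst_hset[symmetric] using p(2) by (rule image_mono)
  ultimately show "\<exists>T. openin baire_top T \<and> y \<in> T \<and> T \<subseteq> decode_fst ` U"
    using openin_baire_top_cyl unfolding coded_def by blast
qed

context
  fixes E :: "nat \<Rightarrow> baire set" and W :: hechler
  assumes nowhere_dense_E: "\<And>k. nowhere_dense_in dominating_top (E k)"
begin

definition shrink :: "nat \<Rightarrow> hechler \<Rightarrow> hechler" where
  "shrink k p = (SOME q. q \<preceq> p \<and> hset q \<inter> E k = {})"

lemma shrink: "shrink k p \<preceq> p" "hset (shrink k p) \<inter> E k = {}"
proof -
  obtain q where "q \<preceq> p" "hset q \<inter> E k = {}"
    using nowhere_dense_in_dominating_top_avoid[OF nowhere_dense_E] .
  then show "shrink k p \<preceq> p" "hset (shrink k p) \<inter> E k = {}"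
    unfolding shrink_def by (metis (mono_tags, lifting) someI)+
qed

text \<open>The stem is lengthened by one so that a candidate always fixes more of \<open>y\<close> than has been
  read.\<close>

definition candidate :: "nat \<Rightarrow> hechler \<Rightarrow> baire \<Rightarrow> nat \<Rightarrow> hechler" where
  "candidate k p y m =
    (let q = shrink k (max (fst p) m,
           \<lambda>i. if fst p \<le> i \<and> i < m then prod_encode (y i, snd p i) else snd p i)
     in (Suc (fst q), snd q))"

lemma candidate_cong: "(\<And>i. i < m \<Longrightarrow> y i = z i) \<Longrightarrow> candidate k p y m = candidate k p z m"
  unfolding candidate_def by (metis (no_types, lifting))

lemma candidate:
  assumes "y \<in> coded p"
  shows "candidate k p y m \<preceq> p" "hset (candidate k p y m) \<inter> E k = {}"
    "m < fst (candidate k p y m)" "y \<in> cyl (decode_fst (snd (candidate k p y m))) m"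
proof -
  define p' where
    "p' = (max (fst p) m, \<lambda>i. if fst p \<le> i \<and> i < m then prod_encode (y i, snd p i) else snd p i)"
  define q where "q = shrink k p'"
  have c: "candidate k p y m = (Suc (fst q), snd q)"
    unfolding candidate_def q_def p'_def Let_def by simp
  have "p' \<preceq> p"
    unfolding hechler_le_def p'_def by (auto simp: le_prod_encode_2)
  moreover have "(Suc (fst q), snd q) \<preceq> q"
    unfolding hechler_le_def by auto
  ultimately show "candidate k p y m \<preceq> p"
    unfolding c q_def using shrink(1) hechler_le_trans by blast
  show "hset (candidate k p y m) \<inter> E k = {}"
    unfolding c q_def using shrink(2) hset_mono[OF \<open>(Suc (fst q), snd q) \<preceq> q\<close>] q_def by blast
  have "q \<preceq> p'" unfolding q_def by (rule shrink(1))
  then show "m < fst (candidate k p y m)"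
    unfolding c hechler_le_def p'_def by auto
  have "snd q i = snd p' i" if "i < m" for i
    using \<open>q \<preceq> p'\<close> that unfolding hechler_le_def p'_def by auto
  then show "y \<in> cyl (decode_fst (snd (candidate k p y m))) m"
    using assms unfolding c p'_def coded_def cyl_def decode_fst_def by auto
qed

text \<open>The state \<open>(p, k, q)\<close> after reading \<open>y\<close> below \<open>n\<close>: \<open>p\<close> is the last accepted
  condition, it avoids \<open>E 0, \<dots>, E (k - 1)\<close>, and \<open>q\<close> is the candidate for avoiding \<open>E k\<close>.
  The candidate is accepted once \<open>y\<close> has been read along its whole stem without deviating
  from what it codes, and rebuilt from \<open>p\<close> as soon as \<open>y\<close> deviates.\<close>

primrec fusion :: "baire \<Rightarrow> nat \<Rightarrow> hechler \<times> nat \<times> hechler" where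
  "fusion y 0 = (W, 0, candidate 0 W y 0)"
| "fusion y (Suc n) = (case fusion y n of (p, k, q) \<Rightarrow>
     if y n \<noteq> decode_fst (snd q) n then (p, k, candidate k p y (Suc n))
     else if fst q = Suc n then (q, Suc k, candidate (Suc k) q y (Suc n))
     else (p, k, q))"

lemma fusion_cong: "(\<And>i. i < n \<Longrightarrow> y i = z i) \<Longrightarrow> fusion y n = fusion z n"
proof (induction n)
  case 0
  then show ?case using candidate_cong[of 0 y z] by simp
next
  case (Suc n)
  then have "fusion y n = fusion z n" "y n = z n" by simp_all
  moreover have "\<And>k p. candidate k p y (Suc n) = candidate k p z (Suc n)"
    using candidate_cong Suc.prems by blast
  ultimately show ?case by (simp split: prod.split)
qed

lemma fusion_invariant:
  assumes "y \<in> coded W" "fusion y n = (p, k, q)"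
  shows "p \<preceq> W \<and> y \<in> coded p \<and> q \<preceq> p \<and> hset q \<inter> E k = {} \<and>
    n < fst q \<and> y \<in> cyl (decode_fst (snd q)) n \<and> (\<forall>j<k. hset p \<inter> E j = {}) \<and> k \<le> n \<and> k \<le> fst p"
  using assms(2)
proof (induction n arbitrary: p k q)
  case 0
  then show ?case using candidate[OF assms(1), where k = 0 and m = 0] assms(1) by auto
next
  case (Suc n)
  obtain p0 k0 q0 where prev: "fusion y n = (p0, k0, q0)" by (metis prod.exhaust)
  note IH = Suc.IH[OF prev]
  consider (deviate) "y n \<noteq> decode_fst (snd q0) n"
    | (accept) "y n = decode_fst (snd q0) n" "fst q0 = Suc n"
    | (wait) "y n = decode_fst (snd q0) n" "fst q0 \<noteq> Suc n"
    by blast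
  then show ?case
  proof cases
    case deviate
    then have "p = p0" "k = k0" "q = candidate k0 p0 y (Suc n)"
      using Suc.prems prev by auto
    then show ?thesis using candidate[OF _, where k = k0 and m = "Suc n"] IH by auto
  next
    case accept
    then have new: "p = q0" "k = Suc k0" "q = candidate (Suc k0) q0 y (Suc n)"
      using Suc.prems prev by auto
    have "y \<in> coded q0"
      using accept IH unfolding coded_def cyl_def by (auto simp: less_Suc_eq)
    moreover have "\<forall>j<Suc k0. hset q0 \<inter> E j = {}"
      using IH hset_mono[of q0 p0] by (auto simp: less_Suc_eq)
    moreover have "q0 \<preceq> W" using IH hechler_le_trans by blast
    ultimately show ?thesis
      unfolding new using candidate[where k = "Suc k0" and m = "Suc n"] IH accept by auto
  next
    case wait
    then have "p = p0" "k = k0" "q = q0" using Suc.prems prev by auto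
    then show ?thesis using IH wait unfolding cyl_def by (auto simp: less_Suc_eq)
  qed
qed

lemma fusion_mono:
  assumes "y \<in> coded W" "n \<le> m"
  shows "fst (fusion y m) \<preceq> fst (fusion y n) \<and> fst (snd (fusion y n)) \<le> fst (snd (fusion y m))"
  using assms(2)
proof (induction m rule: dec_induct)
  case (step m)
  obtain p k q where "fusion y m = (p, k, q)" by (metis prod.exhaust)
  moreover have "q \<preceq> p" using fusion_invariant[OF assms(1) calculation] by blast
  ultimately have "fst (fusion y (Suc m)) \<preceq> fst (fusion y m)"
    "fst (snd (fusion y m)) \<le> fst (snd (fusion y (Suc m)))"
    by auto
  then show ?case using step.IH hechler_le_trans order_trans by blast
qed simp

lemma fusion_accepts:
  assumes "y \<in> coded W" "fusion y n = (p, k, q)" "y \<in> coded q"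
  shows "fst (snd (fusion y (fst q))) = Suc k"
proof -
  have n_q: "n < fst q" using fusion_invariant[OF assms(1,2)] by blast
  have agree: "y i = decode_fst (snd q) i" if "i < fst q" for i
    using assms(3) that unfolding coded_def cyl_def by blast
  have wait: "fusion y (n + d) = (p, k, q)" if "n + d < fst q" for d
    using that by (induction d) (auto simp: assms(2) agree)
  define d where "d = fst q - Suc n"
  have "fst q = Suc (n + d)" using n_q unfolding d_def by simp
  then show ?thesis using wait[of d] agree[of "n + d"] by simp
qed

lemma fusion_counter_dense:
  assumes "y \<in> coded W"
  shows "\<exists>y' \<in> cyl y L \<inter> coded W. \<exists>m. \<forall>z \<in> cyl y' m. \<exists>n. K \<le> fst (snd (fusion z n))"
  using assms
proof (induction K arbitrary: y L)
  case 0
  then show ?case by (intro bexI[of _ y]) auto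
next
  case (Suc K)
  obtain y1 m1 where y1: "y1 \<in> cyl y L \<inter> coded W" "\<forall>z \<in> cyl y1 m1. \<exists>n. K \<le> fst (snd (fusion z n))"
    using Suc.IH[OF Suc.prems] by blast
  obtain n1 where "K \<le> fst (snd (fusion y1 n1))" using y1(2) self_in_cyl by blast
  define n where "n = max n1 (max L (fst W))"
  obtain p k q where state: "fusion y1 n = (p, k, q)" by (metis prod.exhaust)
  have "K \<le> k"
    using \<open>K \<le> _\<close> fusion_mono[OF y1(1)[THEN IntD2], of n1 n] state unfolding n_def by auto
  \<comment> \<open>follow \<open>y1\<close> below \<open>n\<close> and what \<open>q\<close> codes above, so that \<open>q\<close> gets accepted\<close>
  define y2 where "y2 i = (if i < n then y1 i else decode_fst (snd q) i)" for i
  have state2: "fusion y2 n = (p, k, q)"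
    using state fusion_cong[of n y2 y1] unfolding y2_def by auto
  have "y2 \<in> cyl y L \<inter> coded W"
    using y1(1) unfolding y2_def n_def coded_def cyl_def by auto
  moreover have "y2 \<in> coded q"
    using fusion_invariant[OF y1(1)[THEN IntD2] state] unfolding y2_def coded_def cyl_def by auto
  then have "fst (snd (fusion z (fst q))) = Suc k" if "z \<in> cyl y2 (fst q)" for z
    using fusion_accepts[OF \<open>y2 \<in> cyl y L \<inter> coded W\<close>[THEN IntD2] state2]
      fusion_cong[of "fst q" z y2] that unfolding cyl_def by simp
  ultimately show ?case using \<open>K \<le> k\<close> by (metis Suc_le_mono)
qed

lemma fusion_limit:
  assumes y: "y \<in> coded W" and unbounded: "\<And>K. \<exists>n. K \<le> fst (snd (fusion y n))"
  obtains x where "x \<in> hset W" "decode_fst x = y" "\<And>j. x \<notin> E j"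
proof -
  define c where "c n = fst (fusion y n)" for n
  have inv: "c n \<preceq> W \<and> y \<in> coded (c n) \<and> (\<forall>j<fst (snd (fusion y n)). hset (c n) \<inter> E j = {}) \<and>
      fst (snd (fusion y n)) \<le> fst (c n)" for n
    using fusion_invariant[OF y, of n "c n" "fst (snd (fusion y n))" "snd (snd (fusion y n))"]
    unfolding c_def by simp
  have long_stem: "\<exists>n. i < fst (c n)" for i
    using unbounded[of "Suc i"] inv by (meson Suc_le_eq order_less_le_trans)
  obtain x where x: "\<And>n. x \<in> hset (c n)"
    using hechler_chain_limit[of c] fusion_mono[OF y] long_stem unfolding c_def by blast
  show ?thesis
  proof
    show "x \<in> hset W" using x[of 0] inv[of 0] hset_mono by blast
    show "decode_fst x = y"
    proof
      fix i
      obtain n where "i < fst (c n)" using long_stem by blast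
      then show "decode_fst x i = y i"
        using x[of n] inv[of n] by (auto simp: decode_fst_def coded_def cyl_def hset_def dom_basic_def)
    qed
    fix j
    obtain n where "Suc j \<le> fst (snd (fusion y n))" using unbounded by blast
    then have "hset (c n) \<inter> E j = {}" using inv[of n] by (simp add: Suc_le_eq)
    then show "x \<notin> E j" using x[of n] by blast
  qed
qed

lemma meager_in_coded_if_covered:
  assumes "decode_fst -` M \<inter> hset W \<subseteq> (\<Union>k. E k)"
  shows "meager_in baire_top (M \<inter> coded W)"
proof -
  define N where "N K = coded W - {y. \<exists>n. K \<le> fst (snd (fusion y n))}" for K
  have "nowhere_dense_in baire_top (N K)" for K
  proof (rule nowhere_dense_in_baire_top_if)
    fix y L
    show "\<exists>y' \<in> cyl y L. \<exists>m. cyl y' m \<inter> N K = {}"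
    proof (cases "y \<in> coded W")
      case True
      then obtain y' m where "y' \<in> cyl y L" "\<forall>z \<in> cyl y' m. \<exists>n. K \<le> fst (snd (fusion z n))"
        using fusion_counter_dense[of y L K] by blast
      moreover from this(2) have "cyl y' m \<inter> N K = {}"
        unfolding N_def by blast
      ultimately show ?thesis by blast
    next
      case False
      then have "cyl y (fst W) \<inter> coded W = {}"
        unfolding coded_def cyl_def by auto
      then have "cyl y (fst W) \<inter> N K = {}"
        unfolding N_def by blast
      then show ?thesis using self_in_cyl by blast
    qed
  qed
  moreover have "M \<inter> coded W \<subseteq> (\<Union>K. N K)"
  proof
    fix y assume y: "y \<in> M \<inter> coded W"
    show "y \<in> (\<Union>K. N K)"
    proof (rule ccontr)
      assume "y \<notin> (\<Union>K. N K)"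
      then have "\<exists>n. K \<le> fst (snd (fusion y n))" for K using y unfolding N_def by blast
      then obtain x where "x \<in> hset W" "decode_fst x = y" "\<And>j. x \<notin> E j"
        using fusion_limit y by blast
      then show False using assms y by blast
    qed
  qed
  ultimately show ?thesis unfolding meager_in_def by blast
qed

end

lemma meager_in_baire_top_if_meager_preimage:
  assumes "meager_in dominating_top (decode_fst -` M \<inter> hset p)"
  shows "meager_in baire_top (M \<inter> coded p)"
proof -
  obtain E :: "nat \<Rightarrow> baire set" where "\<And>k. nowhere_dense_in dominating_top (E k)" "decode_fst -` M \<inter> hset p \<subseteq> (\<Union>k. E k)"
    using assms unfolding meager_in_def by blast
  then show ?thesis by (rule meager_in_coded_if_covered)
qed

lemma meager_in_baire_top_diff_image:
  assumes "meager_in dominating_top (decode_fst -` A - U)"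
  shows "meager_in baire_top (A - decode_fst ` U)"
proof -
  let ?top = "(0, \<lambda>_. 0) :: hechler"
  have "meager_in dominating_top (decode_fst -` (A - decode_fst ` U) \<inter> hset ?top)"
    using assms by (rule meager_in_subset) blast
  then have "meager_in baire_top ((A - decode_fst ` U) \<inter> coded ?top)"
    by (rule meager_in_baire_top_if_meager_preimage)
  moreover have "coded ?top = UNIV"
    by (simp add: coded_def cyl_def)
  ultimately show ?thesis by simp
qed

lemma meager_in_baire_top_image_diff:
  assumes "openin dominating_top U" "meager_in dominating_top (U - decode_fst -` A)"
  shows "meager_in baire_top (decode_fst ` U - A)"
proof (rule meager_in_baire_top_if_locally_meager)
  fix y assume "y \<in> decode_fst ` U - A"
  then obtain x where x: "x \<in> U" "y = decode_fst x" by blast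
  obtain p where p: "x \<in> hset p" "hset p \<subseteq> U"
    using openin_dominating_top_contains_hset[OF assms(1) x(1)] .
  have "meager_in dominating_top (decode_fst -` (- A) \<inter> hset p)"
    using assms(2) by (rule meager_in_subset) (use p(2) in blast)
  then have "meager_in baire_top (- A \<inter> coded p)"
    by (rule meager_in_baire_top_if_meager_preimage)
  moreover have "y \<in> coded p"
    unfolding decode_fst_hset[symmetric] x(2) using p(1) by (rule imageI)
  then have "(decode_fst ` U - A) \<inter> cyl y (fst p) \<subseteq> - A \<inter> coded p"
    using coded_eq_cyl by blast
  ultimately have "meager_in baire_top ((decode_fst ` U - A) \<inter> cyl y (fst p))"
    by (rule meager_in_subset)
  then show "\<exists>m. meager_in baire_top ((decode_fst ` U - A) \<inter> cyl y m)" ..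
qed

theorem theorem3p1:
  fixes \<Gamma> :: "baire set set"
  assumes "top_reasonable \<Gamma>"
    and "\<forall>A\<in>\<Gamma>. baire_property_in dominating_top A"
  shows "\<forall>A\<in>\<Gamma>. baire_property_in baire_top A"
proof
  fix A assume "A \<in> \<Gamma>"
  then have "decode_fst -` A \<in> \<Gamma>"
    using assms(1) continuous_map_decode_fst unfolding top_reasonable_def by blast
  then obtain U where U: "openin dominating_top U"
    "meager_in dominating_top ((decode_fst -` A - U) \<union> (U - decode_fst -` A))"
    using assms(2) unfolding baire_property_in_def by blast
  have "meager_in baire_top (A - decode_fst ` U)"
    by (rule meager_in_baire_top_diff_image, rule meager_in_subset[OF U(2)]) blast
  moreover have "meager_in baire_top (decode_fst ` U - A)"
    by (rule meager_in_baire_top_image_diff[OF U(1)], rule meager_in_subset[OF U(2)]) blast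
  ultimately have "meager_in baire_top ((A - decode_fst ` U) \<union> (decode_fst ` U - A))"
    by (rule meager_in_Un)
  then show "baire_property_in baire_top A"
    unfolding baire_property_in_def using openin_baire_top_image_decode_fst[OF U(1)] by blast
qed

end
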